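(* (Bandit setting.) Let $A$ arms have reward distributions supported in $[0,1]$ with mean reward vector $r\in[0,1]^A$, and let $\Delta:=\min_{a\ne a'}|r(a)-r(a')|$. For $\theta\in\mathbb{R}^A$ let $f(\theta)=\langle\pi_\theta,r\rangle$, sample $a\sim\pi_\theta$, observe $R\sim P_a$, form $\hat r(a')=\frac{\mathbb{I}\{a=a'\}}{\pi_\theta(a')}R$ and $\hat g(\theta)(a')=\pi_\theta(a')[\hat r(a')-\langle\pi_\theta,\hat r\rangle]$. Then for all $\theta$, $\mathbb{E}\|\hat g(\theta)\|_2^2\le\varrho\,\|\nabla f(\theta)\|_2$ with $\varrho:=\frac{8A^{3/2}}{\Delta^2}$. (Tabular MDP setting.) For a finite discounted MDP with $S$ states, $A$ actions, rewards in $[0,1]$, discount $\gamma\in[0,1)$, initial distribution $\rho$, and softmax tabular policy $\pi_\theta$, let $f(\theta)=V^{\pi_\theta}(\rho)$. Sample independently $a(s)\sim\pi_\theta(\cdot\mid s)$ for every state $s$, set $\hat Q^{\pi_\theta}(s,a)=\frac{\mathbb{I}\{a(s)=a\}}{\pi_\theta(a\mid s)}Q^{\pi_\theta}(s,a)$ and $\hat g(\theta)(s,a)=\frac{1}{1-\gamma}d^{\pi_\theta}_\rho(s)\,\pi_\theta(a\mid s)\big(\hat Q^{\pi_\theta}(s,a)-\langle\pi_\theta(\cdot\mid s),\hat Q^{\pi_\theta}(s,\cdot)\rangle\big)$. Then for all $\theta$, $\mathbb{E}\|\hat g(\theta)\|_2^2\le\varrho\,\|\nabla f(\theta)\|_2$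 with $\varrho:=\frac{4A^{3/2}S^{1/2}}{(1-\gamma)^4\Delta^2}$, where $\Delta:=\min_s\min_{a\ne a'}|Q^{\pi_\theta}(s,a)-Q^{\pi_\theta}(s,a')|$.
   Context: Softmax policy: $\pi_\theta(a)=\exp(\theta(a))/\sum_{a'}\exp(\theta(a'))$ (bandit) and $\pi_\theta(a\mid s)=\exp(\theta(s,a))/\sum_{a'}\exp(\theta(s,a'))$ (MDP). In the MDP, $Q^\pi(s,a)=\mathbb{E}[\sum_{t\ge0}\gamma^t r(s_t,a_t)\mid s_0=s,a_0=a]$ under $\pi$, $V^\pi(s)=\mathbb{E}_{a\sim\pi(\cdot|s)}Q^\pi(s,a)$, $V^\pi(\rho)=\mathbb{E}_{s\sim\rho}V^\pi(s)$, $A^\pi=Q^\pi-V^\pi$, and $d^\pi_\rho(s)=(1-\gamma)\mathbb{E}_{s_0\sim\rho}\sum_{t\ge0}\gamma^t\Pr^\pi[s_t=s\mid s_0]$. The exact gradients are $\nabla f(\theta)(a)=\pi_\theta(a)[r(a)-\langle\pi_\theta,r\rangle]$ (bandit) and $\nabla f(\theta)(s,a)=\frac{1}{1-\gamma}d^{\pi_\theta}_\rho(s)\pi_\theta(a\mid s)A^{\pi_\theta}(s,a)$ (MDP). Expectations are over the sampled actions (and rewards). *)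

theory Defs
  imports "HOL-Probability.Probability"
begin

definition softmax :: "('a::finite \<Rightarrow> real) \<Rightarrow> 'a \<Rightarrow> real" where
  "softmax \<theta> a = exp (\<theta> a) / (\<Sum>a'\<in>UNIV. exp (\<theta> a'))"

definition l2norm :: "('i::finite \<Rightarrow> real) \<Rightarrow> real" where
  "l2norm v = sqrt (\<Sum>i\<in>UNIV. (v i)\<^sup>2)"

definition mean_reward :: "('a \<Rightarrow> real measure) \<Rightarrow> 'a \<Rightarrow> real" where
  "mean_reward P a = (\<integral>x. x \<partial>(P a))"

definition bandit_obj :: "('a::finite \<Rightarrow> real) \<Rightarrow> ('a \<Rightarrow> real) \<Rightarrow> real" where
  "bandit_obj r \<theta> = (\<Sum>a\<in>UNIV. softmax \<theta> a * r a)"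

definition bandit_grad :: "('a::finite \<Rightarrow> real) \<Rightarrow> ('a \<Rightarrow> real) \<Rightarrow> 'a \<Rightarrow> real" where
  "bandit_grad r \<theta> a = softmax \<theta> a * (r a - bandit_obj r \<theta>)"

definition bandit_rhat :: "('a::finite \<Rightarrow> real) \<Rightarrow> 'a \<Rightarrow> real \<Rightarrow> 'a \<Rightarrow> real" where
  "bandit_rhat \<theta> a R a' = (if a = a' then 1 else 0) / softmax \<theta> a' * R"

definition bandit_ghat :: "('a::finite \<Rightarrow> real) \<Rightarrow> 'a \<Rightarrow> real \<Rightarrow> 'a \<Rightarrow> real" where
  "bandit_ghat \<theta> a R a' =
     softmax \<theta> a' * (bandit_rhat \<theta> a R a' - (\<Sum>b\<in>UNIV. softmax \<theta> b * bandit_rhat \<theta> a R b))"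

definition bandit_second_moment :: "('a::finite \<Rightarrow> real measure) \<Rightarrow> ('a \<Rightarrow> real) \<Rightarrow> real" where
  "bandit_second_moment P \<theta> =
     (\<Sum>a\<in>UNIV. softmax \<theta> a * (\<integral>R. (l2norm (bandit_ghat \<theta> a R))\<^sup>2 \<partial>(P a)))"

definition bandit_gap :: "('a \<Rightarrow> real) \<Rightarrow> real" where
  "bandit_gap r = Min {\<bar>r a - r a'\<bar> | a a'. a \<noteq> a'}"

definition tpol :: "('s \<Rightarrow> 'a::finite \<Rightarrow> real) \<Rightarrow> 's \<Rightarrow> 'a \<Rightarrow> real" where
  "tpol \<theta> s a = softmax (\<theta> s) a"

text \<open>Distribution of (s_t, a_t) given s_0 = s, a_0 = a, under transition kernel Pt and policy pi.\<close>
fun sa_dist :: "('s::finite \<Rightarrow> 'a::finite \<Rightarrow> 's pmf) \<Rightarrow> ('s \<Rightarrow> 'a \<Rightarrow> real) \<Rightarrow> 's \<Rightarrow> 'a \<Rightarrow> nat \<Rightarrow> 's \<Rightarrow> 'a \<Rightarrow> real" where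
  "sa_dist Pt \<pi> s a 0 s' a' = (if s' = s \<and> a' = a then 1 else 0)"
| "sa_dist Pt \<pi> s a (Suc t) s' a' =
     (\<Sum>u\<in>UNIV. \<Sum>b\<in>UNIV. sa_dist Pt \<pi> s a t u b * pmf (Pt u b) s') * \<pi> s' a'"

definition Qfun :: "('s::finite \<Rightarrow> 'a::finite \<Rightarrow> 's pmf) \<Rightarrow> ('s \<Rightarrow> 'a \<Rightarrow> real) \<Rightarrow> real \<Rightarrow> ('s \<Rightarrow> 'a \<Rightarrow> real) \<Rightarrow> 's \<Rightarrow> 'a \<Rightarrow> real" where
  "Qfun Pt rw \<gamma> \<pi> s a =
     (\<Sum>t. \<gamma> ^ t * (\<Sum>s'\<in>UNIV. \<Sum>a'\<in>UNIV. sa_dist Pt \<pi> s a t s' a' * rw s' a'))"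

definition Vfun :: "('s::finite \<Rightarrow> 'a::finite \<Rightarrow> 's pmf) \<Rightarrow> ('s \<Rightarrow> 'a \<Rightarrow> real) \<Rightarrow> real \<Rightarrow> ('s \<Rightarrow> 'a \<Rightarrow> real) \<Rightarrow> 's \<Rightarrow> real" where
  "Vfun Pt rw \<gamma> \<pi> s = (\<Sum>a\<in>UNIV. \<pi> s a * Qfun Pt rw \<gamma> \<pi> s a)"

definition Vrho :: "('s::finite \<Rightarrow> 'a::finite \<Rightarrow> 's pmf) \<Rightarrow> ('s \<Rightarrow> 'a \<Rightarrow> real) \<Rightarrow> real \<Rightarrow> 's pmf \<Rightarrow> ('s \<Rightarrow> 'a \<Rightarrow> real) \<Rightarrow> real" where
  "Vrho Pt rw \<gamma> \<rho> \<pi> = (\<Sum>s\<in>UNIV. pmf \<rho> s * Vfun Pt rw \<gamma> \<pi> s)"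

definition Afun :: "('s::finite \<Rightarrow> 'a::finite \<Rightarrow> 's pmf) \<Rightarrow> ('s \<Rightarrow> 'a \<Rightarrow> real) \<Rightarrow> real \<Rightarrow> ('s \<Rightarrow> 'a \<Rightarrow> real) \<Rightarrow> 's \<Rightarrow> 'a \<Rightarrow> real" where
  "Afun Pt rw \<gamma> \<pi> s a = Qfun Pt rw \<gamma> \<pi> s a - Vfun Pt rw \<gamma> \<pi> s"

text \<open>Pr^pi[s_t = s' | s_0 = s].\<close>
fun st_dist :: "('s::finite \<Rightarrow> 'a::finite \<Rightarrow> 's pmf) \<Rightarrow> ('s \<Rightarrow> 'a \<Rightarrow> real) \<Rightarrow> 's \<Rightarrow> nat \<Rightarrow> 's \<Rightarrow> real" where
  "st_dist Pt \<pi> s 0 s' = (if s' = s then 1 else 0)"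
| "st_dist Pt \<pi> s (Suc t) s' =
     (\<Sum>u\<in>UNIV. \<Sum>b\<in>UNIV. st_dist Pt \<pi> s t u * \<pi> u b * pmf (Pt u b) s')"

definition dvisit :: "('s::finite \<Rightarrow> 'a::finite \<Rightarrow> 's pmf) \<Rightarrow> real \<Rightarrow> 's pmf \<Rightarrow> ('s \<Rightarrow> 'a \<Rightarrow> real) \<Rightarrow> 's \<Rightarrow> real" where
  "dvisit Pt \<gamma> \<rho> \<pi> s = (1 - \<gamma>) * (\<Sum>s0\<in>UNIV. pmf \<rho> s0 * (\<Sum>t. \<gamma> ^ t * st_dist Pt \<pi> s0 t s))"

definition mdp_grad :: "('s::finite \<Rightarrow> 'a::finite \<Rightarrow> 's pmf) \<Rightarrow> ('s \<Rightarrow> 'a \<Rightarrow> real) \<Rightarrow> real \<Rightarrow> 's pmf \<Rightarrow> ('s \<Rightarrow> 'a \<Rightarrow> real) \<Rightarrow> 's \<times> 'a \<Rightarrow> real" where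
  "mdp_grad Pt rw \<gamma> \<rho> \<theta> sa =
     (let \<pi> = tpol \<theta>; s = fst sa; a = snd sa in
       1 / (1 - \<gamma>) * dvisit Pt \<gamma> \<rho> \<pi> s * \<pi> s a * Afun Pt rw \<gamma> \<pi> s a)"

text \<open>Estimator given sampled actions sigma s ~ pi_theta(.|s), independently per state.\<close>
definition mdp_Qhat :: "('s::finite \<Rightarrow> 'a::finite \<Rightarrow> 's pmf) \<Rightarrow> ('s \<Rightarrow> 'a \<Rightarrow> real) \<Rightarrow> real \<Rightarrow> ('s \<Rightarrow> 'a \<Rightarrow> real) \<Rightarrow> ('s \<Rightarrow> 'a) \<Rightarrow> 's \<Rightarrow> 'a \<Rightarrow> real" where
  "mdp_Qhat Pt rw \<gamma> \<theta> \<sigma> s a =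
     (if \<sigma> s = a then 1 else 0) / tpol \<theta> s a * Qfun Pt rw \<gamma> (tpol \<theta>) s a"

definition mdp_ghat :: "('s::finite \<Rightarrow> 'a::finite \<Rightarrow> 's pmf) \<Rightarrow> ('s \<Rightarrow> 'a \<Rightarrow> real) \<Rightarrow> real \<Rightarrow> 's pmf \<Rightarrow> ('s \<Rightarrow> 'a \<Rightarrow> real) \<Rightarrow> ('s \<Rightarrow> 'a) \<Rightarrow> 's \<times> 'a \<Rightarrow> real" where
  "mdp_ghat Pt rw \<gamma> \<rho> \<theta> \<sigma> sa =
     (let \<pi> = tpol \<theta>; s = fst sa; a = snd sa in
       1 / (1 - \<gamma>) * dvisit Pt \<gamma> \<rho> \<pi> s * \<pi> s a *
       (mdp_Qhat Pt rw \<gamma> \<theta> \<sigma> s a - (\<Sum>b\<in>UNIV. \<pi> s b * mdp_Qhat Pt rw \<gamma> \<theta> \<sigma> s b)))"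

definition mdp_second_moment :: "('s::finite \<Rightarrow> 'a::finite \<Rightarrow> 's pmf) \<Rightarrow> ('s \<Rightarrow> 'a \<Rightarrow> real) \<Rightarrow> real \<Rightarrow> 's pmf \<Rightarrow> ('s \<Rightarrow> 'a \<Rightarrow> real) \<Rightarrow> real" where
  "mdp_second_moment Pt rw \<gamma> \<rho> \<theta> =
     (\<Sum>\<sigma>\<in>(UNIV :: ('s \<Rightarrow> 'a) set). (\<Prod>s\<in>UNIV. tpol \<theta> s (\<sigma> s)) *
        (l2norm (mdp_ghat Pt rw \<gamma> \<rho> \<theta> \<sigma>))\<^sup>2)"

definition mdp_gap :: "('s::finite \<Rightarrow> 'a::finite \<Rightarrow> 's pmf) \<Rightarrow> ('s \<Rightarrow> 'a \<Rightarrow> real) \<Rightarrow> real \<Rightarrow> ('s \<Rightarrow> 'a \<Rightarrow> real) \<Rightarrow> real" where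
  "mdp_gap Pt rw \<gamma> \<theta> =
     Min {\<bar>Qfun Pt rw \<gamma> (tpol \<theta>) s a - Qfun Pt rw \<gamma> (tpol \<theta>) s a'\<bar> | s a a'. a \<noteq> a'}"

end

theory Submission
  imports Defs
begin

text \<open>
  Both estimators are a scalar multiple of \<open>e\<^sub>a - \<pi>\<close>, where \<open>a \<sim> \<pi>\<close> is the sampled action
  (in each state, for the MDP) and the scalar is at most \<open>1\<close> (bandit) or \<open>d(s) / (1 - \<gamma>)\<^sup>2\<close>
  (MDP). As \<open>\<Sum>\<^sub>a \<pi>(a) \<parallel>e\<^sub>a - \<pi>\<parallel>\<^sup>2 = 1 - \<parallel>\<pi>\<parallel>\<^sup>2\<close>, the second moment is at most \<open>1 - \<parallel>\<pi>\<parallel>\<^sup>2\<close>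
  (weighted by \<open>d(s) / (1 - \<gamma>)\<^sup>4\<close> per state). Conversely, if the values \<open>q(a)\<close> (mean rewards,
  resp. \<open>Q(s,\<cdot>)\<close>) are \<open>\<Delta>\<close>-separated, at most one of them lies within \<open>\<Delta>/2\<close> of the mean
  \<open>\<langle>\<pi>, q\<rangle>\<close>, which forces the mean absolute deviation \<open>\<Sum>\<^sub>a \<pi>(a) |q(a) - \<langle>\<pi>, q\<rangle>|\<close>, i.e. the
  \<open>\<ell>\<^sub>1\<close>-norm of the exact gradient, to be at least \<open>(1 - \<parallel>\<pi>\<parallel>\<^sup>2) \<Delta> / 4\<close>. Cauchy-Schwarz turns
  \<open>\<ell>\<^sub>1\<close> into \<open>\<ell>\<^sub>2\<close>; the stated constants are weaker by the factors \<open>2A/\<Delta> \<ge> 1\<close> and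
  \<open>A/((1 - \<gamma>)\<Delta>) \<ge> 1\<close>.
\<close>

lemma softmax_pos: "softmax \<theta> a > 0"
  unfolding softmax_def by (intro divide_pos_pos) (auto intro: sum_pos)

lemma sum_softmax: "(\<Sum>a\<in>UNIV. softmax \<theta> a) = 1"
proof -
  have "(\<Sum>a'\<in>UNIV. exp (\<theta> a')) > 0" by (auto intro: sum_pos)
  then show ?thesis unfolding softmax_def by (simp add: sum_divide_distrib[symmetric])
qed

lemma tpol_pos: "tpol \<theta> s a > 0"
  unfolding tpol_def by (rule softmax_pos)

lemma tpol_nonneg: "tpol \<theta> s a \<ge> 0"
  using tpol_pos[of \<theta> s a] by simp

lemma sum_tpol: "(\<Sum>a\<in>UNIV. tpol \<theta> s a) = 1"
  unfolding tpol_def by (rule sum_softmax)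

lemma l2norm_nonneg: "l2norm v \<ge> 0"
  unfolding l2norm_def by (simp add: sum_nonneg)

lemma l2norm_power2: "(l2norm v)\<^sup>2 = (\<Sum>i\<in>UNIV. (v i)\<^sup>2)"
  unfolding l2norm_def by (simp add: sum_nonneg)

lemma sum_abs_le_sqrt_card_l2norm:
  fixes x :: "'i::finite \<Rightarrow> real"
  shows "(\<Sum>i\<in>UNIV. \<bar>x i\<bar>) \<le> sqrt (real CARD('i)) * l2norm x"
proof -
  have "(\<Sum>i\<in>UNIV. 1 * \<bar>x i\<bar>)\<^sup>2 \<le> (\<Sum>i\<in>(UNIV::'i set). 1\<^sup>2) * (\<Sum>i\<in>UNIV. \<bar>x i\<bar>\<^sup>2)"
    by (rule Cauchy_Schwarz_ineq_sum)
  then have "(\<Sum>i\<in>UNIV. \<bar>x i\<bar>)\<^sup>2 \<le> (sqrt (real CARD('i)) * l2norm x)\<^sup>2"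
    by (simp add: power_mult_distrib l2norm_power2)
  then show ?thesis
    by (rule power2_le_imp_le) (simp add: l2norm_nonneg)
qed

lemma powr_three_halves: "0 \<le> x \<Longrightarrow> x powr (3/2) = x * sqrt (x::real)"
  using powr_add[of x 1 "1/2"] by (simp add: powr_half_sqrt)

lemma sum_power2_eq_1_if_trivial_type:
  fixes p :: "'a \<Rightarrow> real"
  assumes "\<forall>a a'::'a. a = a'" and "(\<Sum>a\<in>UNIV. p a) = 1"
  shows "(\<Sum>a\<in>UNIV. (p a)\<^sup>2) = 1"
proof -
  obtain b :: 'a where U: "UNIV = {b}" using assms(1) by blast
  have "p b = 1" using assms(2) unfolding U by simp
  then show ?thesis unfolding U by simp
qed

lemma sum_UNIV_pair:
  "(\<Sum>x\<in>(UNIV::('a::finite \<times> 'b::finite) set). f x) = (\<Sum>s\<in>UNIV. \<Sum>a\<in>UNIV. f (s, a))"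
  by (simp add: sum.cartesian_product flip: UNIV_Times_UNIV)

lemma sum_weighted_sq_dist_indicator:
  fixes p :: "'a::finite \<Rightarrow> real"
  assumes "(\<Sum>a\<in>UNIV. p a) = 1"
  shows "(\<Sum>b\<in>UNIV. p b * (\<Sum>a\<in>UNIV. ((if b = a then 1 else 0) - p a)\<^sup>2))
           = 1 - (\<Sum>a\<in>UNIV. (p a)\<^sup>2)"
proof -
  have sq_dist: "(\<Sum>a\<in>UNIV. ((if b = a then 1 else 0) - p a)\<^sup>2) = 1 - 2 * p b + (\<Sum>a\<in>UNIV. (p a)\<^sup>2)" for b
  proof -
    have "(\<Sum>a\<in>UNIV. ((if b = a then 1 else 0) - p a)\<^sup>2)
        = (\<Sum>a\<in>UNIV. (if b = a then 1 - 2 * p a else 0) + (p a)\<^sup>2)"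
      by (intro sum.cong) (auto simp: power2_eq_square algebra_simps)
    then show ?thesis by (simp add: sum.distrib)
  qed
  have "(\<Sum>b\<in>UNIV. p b * (\<Sum>a\<in>UNIV. ((if b = a then 1 else 0) - p a)\<^sup>2))
           = (\<Sum>b\<in>UNIV. p b * (1 + (\<Sum>a\<in>UNIV. (p a)\<^sup>2)) - 2 * (p b)\<^sup>2)"
    unfolding sq_dist by (simp add: power2_eq_square algebra_simps)
  also have "\<dots> = 1 - (\<Sum>a\<in>UNIV. (p a)\<^sup>2)"
    by (simp add: sum_subtractf assms flip: sum_distrib_right sum_distrib_left)
  finally show ?thesis .
qed

lemma non_collision_mult_gap_le_mean_abs_dev:
  fixes p q :: "'a::finite \<Rightarrow> real"
  assumes p0: "\<And>a. p a \<ge> 0" and p1: "(\<Sum>a\<in>UNIV. p a) = 1" and D0: "D \<ge> 0"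
    and gap: "\<And>a a'. a \<noteq> a' \<Longrightarrow> D \<le> \<bar>q a - q a'\<bar>"
  shows "(1 - (\<Sum>a\<in>UNIV. (p a)\<^sup>2)) * D
           \<le> 4 * (\<Sum>a\<in>UNIV. p a * \<bar>q a - (\<Sum>b\<in>UNIV. p b * q b)\<bar>)"
proof -
  define \<mu> where "\<mu> = (\<Sum>b\<in>UNIV. p b * q b)"
  obtain b where far: "\<And>a. a \<noteq> b \<Longrightarrow> D / 2 \<le> \<bar>q a - \<mu>\<bar>"
  proof (cases "\<exists>b. \<bar>q b - \<mu>\<bar> < D / 2")
    case True
    then obtain b where "\<bar>q b - \<mu>\<bar> < D / 2" by blast
    then have "D / 2 \<le> \<bar>q a - \<mu>\<bar>" if "a \<noteq> b" for a
      using gap[OF that] by linarith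
    then show ?thesis by (rule that)
  next
    case False
    then show ?thesis using that by (meson not_less)
  qed
  have pb: "0 \<le> p b" "p b \<le> 1"
    using p0 p1 member_le_sum[of b UNIV p] by auto
  have "(\<Sum>a\<in>UNIV. p a) = p b + (\<Sum>a\<in>UNIV-{b}. p a)"
    by (simp add: sum.remove)
  then have mass_off_b: "(\<Sum>a\<in>UNIV-{b}. p a) = 1 - p b"
    using p1 by simp
  have "(1 - p b) * (D/2) = (\<Sum>a\<in>UNIV-{b}. p a * (D/2))"
    by (simp only: mass_off_b[symmetric] sum_distrib_right)
  also have "\<dots> \<le> (\<Sum>a\<in>UNIV-{b}. p a * \<bar>q a - \<mu>\<bar>)"
    by (intro sum_mono mult_left_mono far p0) auto
  also have "\<dots> \<le> (\<Sum>a\<in>UNIV. p a * \<bar>q a - \<mu>\<bar>)"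
    by (intro sum_mono2) (auto simp: p0)
  finally have off_b: "(1 - p b) * (D/2) \<le> (\<Sum>a\<in>UNIV. p a * \<bar>q a - \<mu>\<bar>)" .
  have "(p b)\<^sup>2 \<le> (\<Sum>a\<in>UNIV. (p a)\<^sup>2)"
    by (rule member_le_sum) auto
  then have "1 - (\<Sum>a\<in>UNIV. (p a)\<^sup>2) \<le> (1 - p b) * (1 + p b)"
    by (simp add: power2_eq_square algebra_simps)
  also have "\<dots> \<le> (1 - p b) * 2"
    using pb by (intro mult_left_mono) auto
  finally have "(1 - (\<Sum>a\<in>UNIV. (p a)\<^sup>2)) * D \<le> (1 - p b) * 2 * D"
    using D0 by (rule mult_right_mono)
  with off_b show ?thesis unfolding \<mu>_def by linarith
qed

lemma sum_prod_weights_marginal: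
  fixes w :: "'s::finite \<Rightarrow> 'a::finite \<Rightarrow> real"
  assumes "\<And>s. (\<Sum>a\<in>UNIV. w s a) = 1"
  shows "(\<Sum>\<sigma>\<in>(UNIV::('s\<Rightarrow>'a) set). (\<Prod>s\<in>UNIV. w s (\<sigma> s)) * h (\<sigma> s\<^sub>0))
           = (\<Sum>a\<in>UNIV. w s\<^sub>0 a * h a)"
proof -
  define f where "f s b = w s b * (if s = s\<^sub>0 then h b else 1)" for s b
  have "(\<Prod>s\<in>UNIV. f s (\<sigma> s)) = (\<Prod>s\<in>UNIV. w s (\<sigma> s)) * h (\<sigma> s\<^sub>0)" for \<sigma> :: "'s \<Rightarrow> 'a"
    unfolding f_def by (simp add: prod.distrib prod.If_cases)
  then have "(\<Sum>\<sigma>\<in>(UNIV::('s\<Rightarrow>'a) set). (\<Prod>s\<in>UNIV. w s (\<sigma> s)) * h (\<sigma> s\<^sub>0))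
      = (\<Sum>\<sigma>\<in>PiE UNIV (\<lambda>_. UNIV). (\<Prod>s\<in>UNIV. f s (\<sigma> s)))"
    by simp
  also have "\<dots> = (\<Prod>s\<in>UNIV. \<Sum>b\<in>UNIV. f s b)"
    by (rule prod_sum_PiE[symmetric]) auto
  also have "\<dots> = (\<Prod>s\<in>UNIV. if s = s\<^sub>0 then (\<Sum>a\<in>UNIV. w s\<^sub>0 a * h a) else 1)"
    by (intro prod.cong) (auto simp: f_def assms)
  also have "\<dots> = (\<Sum>a\<in>UNIV. w s\<^sub>0 a * h a)"
    by (simp add: prod.If_cases)
  finally show ?thesis .
qed

lemma le_div_power2_if_mult_le:
  fixes E \<Delta> B C g :: real
  assumes "E * \<Delta> \<le> C * g" "0 < \<Delta>" "\<Delta> \<le> B" "0 \<le> C" "0 \<le> g"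
  shows "E \<le> C * B / \<Delta>\<^sup>2 * g"
proof -
  have "E * \<Delta> * \<Delta> \<le> C * g * \<Delta>"
    using assms(1,2) by (intro mult_right_mono) auto
  also have "\<dots> \<le> C * g * B"
    using assms(3-5) by (intro mult_left_mono) auto
  finally show ?thesis
    using assms(2) by (simp add: field_simps power2_eq_square)
qed

lemma integral_in_unit_interval:
  fixes f :: "'b \<Rightarrow> real"
  assumes "prob_space M" and "AE x in M. 0 \<le> f x \<and> f x \<le> 1"
  shows "0 \<le> (\<integral>x. f x \<partial>M) \<and> (\<integral>x. f x \<partial>M) \<le> 1"
proof
  show "0 \<le> (\<integral>x. f x \<partial>M)"
    using assms(2) by (intro integral_nonneg_AE) auto
  interpret prob_space M by fact
  have "(\<integral>x. f x \<partial>M) \<le> (\<integral>x. 1 \<partial>M)"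
    using assms(2) by (intro integral_mono_AE') auto
  then show "(\<integral>x. f x \<partial>M) \<le> 1" by (simp add: prob_space)
qed

lemma bandit_ghat_eq:
  "bandit_ghat \<theta> a R a' = R * ((if a = a' then 1 else 0) - softmax \<theta> a')"
proof -
  have ne: "softmax \<theta> b \<noteq> 0" for b
    using softmax_pos[of \<theta> b] by simp
  have "(\<Sum>b\<in>UNIV. softmax \<theta> b * bandit_rhat \<theta> a R b) = (\<Sum>b\<in>UNIV. if a = b then R else 0)"
    by (intro sum.cong) (auto simp: bandit_rhat_def ne)
  then show ?thesis
    unfolding bandit_ghat_def by (auto simp: bandit_rhat_def ne algebra_simps)
qed

lemma bandit_second_moment_le:
  fixes P :: "'a::finite \<Rightarrow> real measure"
  assumes P_prob: "\<And>a. prob_space (P a)"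
    and P_supp: "\<And>a. AE x in P a. 0 \<le> x \<and> x \<le> 1"
  shows "bandit_second_moment P \<theta> \<le> 1 - (\<Sum>a\<in>UNIV. (softmax \<theta> a)\<^sup>2)"
proof -
  let ?\<pi> = "softmax \<theta>"
  let ?K = "\<lambda>b. \<Sum>a\<in>UNIV. ((if b = a then 1 else 0) - ?\<pi> a)\<^sup>2"
  have second_moment_R: "0 \<le> (\<integral>x. x\<^sup>2 \<partial>P a) \<and> (\<integral>x. x\<^sup>2 \<partial>P a) \<le> 1" for a
  proof (rule integral_in_unit_interval[OF P_prob])
    show "AE x in P a. 0 \<le> x\<^sup>2 \<and> x\<^sup>2 \<le> 1"
      using P_supp[of a] by eventually_elim (auto simp: power_le_one)
  qed
  have "bandit_second_moment P \<theta> = (\<Sum>a\<in>UNIV. ?\<pi> a * ((\<integral>x. x\<^sup>2 \<partial>P a) * ?K a))"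
    unfolding bandit_second_moment_def l2norm_power2 bandit_ghat_eq
    by (simp add: power_mult_distrib sum_distrib_left[symmetric])
  also have "\<dots> \<le> (\<Sum>a\<in>UNIV. ?\<pi> a * ?K a)"
    using second_moment_R softmax_pos[of \<theta>]
    by (intro sum_mono mult_left_mono mult_left_le_one_le sum_nonneg) (auto simp: less_imp_le)
  also have "\<dots> = 1 - (\<Sum>a\<in>UNIV. (?\<pi> a)\<^sup>2)"
    by (rule sum_weighted_sq_dist_indicator[OF sum_softmax])
  finally show ?thesis .
qed

lemma mean_reward_in_unit_interval:
  assumes "prob_space (P a)" and "AE x in P a. 0 \<le> x \<and> x \<le> 1"
  shows "0 \<le> mean_reward P a \<and> mean_reward P a \<le> 1"
  unfolding mean_reward_def using integral_in_unit_interval[OF assms] .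

lemma bandit_gap_le:
  fixes r :: "'a::finite \<Rightarrow> real"
  assumes "a \<noteq> a'"
  shows "bandit_gap r \<le> \<bar>r a - r a'\<bar>"
proof -
  have "finite {\<bar>r a - r a'\<bar> | a a'. a \<noteq> a'}"
    by (rule finite_subset[of _ "range (\<lambda>(a, a'). \<bar>r a - r a'\<bar>)"]) auto
  then show ?thesis
    unfolding bandit_gap_def using assms by (intro Min_le) blast+
qed

lemma sum_abs_bandit_grad:
  "(\<Sum>a\<in>UNIV. \<bar>bandit_grad r \<theta> a\<bar>)
     = (\<Sum>a\<in>UNIV. softmax \<theta> a * \<bar>r a - (\<Sum>b\<in>UNIV. softmax \<theta> b * r b)\<bar>)"
  unfolding bandit_grad_def bandit_obj_def
  by (intro sum.cong) (auto simp: abs_mult softmax_pos[THEN less_imp_le])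

lemma bandit_second_moment_mult_gap_le:
  fixes P :: "'arm::finite \<Rightarrow> real measure"
  assumes P_prob: "\<And>a. prob_space (P a)"
    and P_supp: "\<And>a. AE x in P a. 0 \<le> x \<and> x \<le> 1"
    and gap_pos: "bandit_gap (mean_reward P) > 0"
  shows "bandit_second_moment P \<theta> * bandit_gap (mean_reward P)
           \<le> 4 * sqrt (real CARD('arm)) * l2norm (bandit_grad (mean_reward P) \<theta>)"
proof -
  let ?r = "mean_reward P"
  let ?\<Delta> = "bandit_gap ?r"
  have "bandit_second_moment P \<theta> * ?\<Delta> \<le> (1 - (\<Sum>a\<in>UNIV. (softmax \<theta> a)\<^sup>2)) * ?\<Delta>"
    using gap_pos by (intro mult_right_mono bandit_second_moment_le[of P, OF P_prob P_supp]) auto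
  also have "\<dots> \<le> 4 * (\<Sum>a\<in>UNIV. \<bar>bandit_grad ?r \<theta> a\<bar>)"
    unfolding sum_abs_bandit_grad using gap_pos
    by (intro non_collision_mult_gap_le_mean_abs_dev bandit_gap_le sum_softmax)
       (auto intro: less_imp_le softmax_pos)
  also have "\<dots> \<le> 4 * (sqrt (real CARD('arm)) * l2norm (bandit_grad ?r \<theta>))"
    by (simp add: sum_abs_le_sqrt_card_l2norm)
  finally show ?thesis by simp
qed

lemma bandit_second_moment_bound:
  fixes P :: "'arm::finite \<Rightarrow> real measure"
  assumes P_prob: "\<And>a. prob_space (P a)"
    and P_supp: "\<And>a. AE x in P a. 0 \<le> x \<and> x \<le> 1"
    and gap_pos: "bandit_gap (mean_reward P) > 0"
  shows "bandit_second_moment P \<theta>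
           \<le> 8 * real CARD('arm) powr (3/2) / (bandit_gap (mean_reward P))\<^sup>2
              * l2norm (bandit_grad (mean_reward P) \<theta>)"
proof (cases "\<forall>a a'::'arm. a = a'")
  case True
  then have "bandit_second_moment P \<theta> \<le> 0"
    using bandit_second_moment_le[of P, OF P_prob P_supp]
    by (simp add: sum_power2_eq_1_if_trivial_type sum_softmax)
  also have "0 \<le> 8 * real CARD('arm) powr (3/2) / (bandit_gap (mean_reward P))\<^sup>2
                  * l2norm (bandit_grad (mean_reward P) \<theta>)"
    by (simp add: l2norm_nonneg)
  finally show ?thesis .
next
  case False
  then obtain a a' :: 'arm where "a \<noteq> a'" by blast
  then have "bandit_gap (mean_reward P) \<le> \<bar>mean_reward P a - mean_reward P a'\<bar>"
    by (rule bandit_gap_le)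
  also have "\<dots> \<le> 1"
    using mean_reward_in_unit_interval[of P a, OF P_prob P_supp]
      mean_reward_in_unit_interval[of P a', OF P_prob P_supp]
    by linarith
  also have "\<dots> \<le> 2 * real CARD('arm)"
  proof -
    have "1 \<le> real CARD('arm)" by simp
    then show ?thesis by linarith
  qed
  finally have "bandit_second_moment P \<theta>
      \<le> 4 * sqrt (real CARD('arm)) * (2 * real CARD('arm)) / (bandit_gap (mean_reward P))\<^sup>2
         * l2norm (bandit_grad (mean_reward P) \<theta>)"
    using bandit_second_moment_mult_gap_le[of P, OF P_prob P_supp gap_pos] gap_pos
    by (intro le_div_power2_if_mult_le) (auto simp: l2norm_nonneg)
  then show ?thesis
    by (simp add: powr_three_halves mult_ac)
qed

lemma st_dist_distribution:
  assumes "\<And>u b. 0 \<le> \<pi> u b" and "\<And>u. (\<Sum>b\<in>UNIV. \<pi> u b) = 1"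
  shows "(\<forall>s'. 0 \<le> st_dist Pt \<pi> s t s') \<and> (\<Sum>s'\<in>UNIV. st_dist Pt \<pi> s t s') = 1"
proof (induction t)
  case 0
  show ?case by simp
next
  case (Suc t)
  have "(\<Sum>s'\<in>UNIV. st_dist Pt \<pi> s (Suc t) s')
      = (\<Sum>s'\<in>UNIV. \<Sum>u\<in>UNIV. \<Sum>b\<in>UNIV. st_dist Pt \<pi> s t u * \<pi> u b * pmf (Pt u b) s')"
    by simp
  also have "\<dots> = (\<Sum>u\<in>UNIV. \<Sum>b\<in>UNIV. \<Sum>s'\<in>UNIV. st_dist Pt \<pi> s t u * \<pi> u b * pmf (Pt u b) s')"
    by (subst sum.swap) (intro sum.cong refl sum.swap)
  also have "\<dots> = (\<Sum>u\<in>UNIV. \<Sum>b\<in>UNIV. st_dist Pt \<pi> s t u * \<pi> u b)"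
    by (simp add: sum_pmf_eq_1 flip: sum_distrib_left)
  also have "\<dots> = 1"
    using Suc assms(2) by (simp flip: sum_distrib_left)
  finally show ?case
    using Suc assms(1) by (auto intro!: sum_nonneg mult_nonneg_nonneg)
qed

lemma sa_dist_distribution:
  assumes "\<And>u b. 0 \<le> \<pi> u b" and "\<And>u. (\<Sum>b\<in>UNIV. \<pi> u b) = 1"
  shows "(\<forall>s' a'. 0 \<le> sa_dist Pt \<pi> s a t s' a')
         \<and> (\<Sum>s'\<in>UNIV. \<Sum>a'\<in>UNIV. sa_dist Pt \<pi> s a t s' a') = 1"
proof (induction t)
  case 0
  have "(\<Sum>a'\<in>UNIV. if s' = s \<and> a' = a then 1 else 0) = (if s' = s then 1 else (0::real))" for s'
    by (cases "s' = s") auto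
  then show ?case by simp
next
  case (Suc t)
  have "(\<Sum>s'\<in>UNIV. \<Sum>a'\<in>UNIV. sa_dist Pt \<pi> s a (Suc t) s' a')
      = (\<Sum>s'\<in>UNIV. \<Sum>u\<in>UNIV. \<Sum>b\<in>UNIV. sa_dist Pt \<pi> s a t u b * pmf (Pt u b) s')"
    by (simp add: assms(2) flip: sum_distrib_left)
  also have "\<dots> = (\<Sum>u\<in>UNIV. \<Sum>b\<in>UNIV. \<Sum>s'\<in>UNIV. sa_dist Pt \<pi> s a t u b * pmf (Pt u b) s')"
    by (subst sum.swap) (intro sum.cong refl sum.swap)
  also have "\<dots> = (\<Sum>u\<in>UNIV. \<Sum>b\<in>UNIV. sa_dist Pt \<pi> s a t u b)"
    by (simp add: sum_pmf_eq_1 flip: sum_distrib_left)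
  also have "\<dots> = 1"
    using Suc by simp
  finally show ?case
    using Suc assms(1) by (auto intro!: sum_nonneg mult_nonneg_nonneg)
qed

lemma discounted_sum_bounds:
  fixes x :: "nat \<Rightarrow> real"
  assumes "0 \<le> \<gamma>" "\<gamma> < 1" and "\<And>t. 0 \<le> x t \<and> x t \<le> 1"
  shows "0 \<le> (\<Sum>t. \<gamma> ^ t * x t) \<and> (\<Sum>t. \<gamma> ^ t * x t) \<le> 1 / (1 - \<gamma>)"
proof -
  have geometric: "summable (\<lambda>t. \<gamma> ^ t)"
    using assms by (intro summable_geometric) auto
  have le: "\<gamma> ^ t * x t \<le> \<gamma> ^ t" and nonneg: "0 \<le> \<gamma> ^ t * x t" for t
    using assms by (auto intro: mult_left_le)
  have summable: "summable (\<lambda>t. \<gamma> ^ t * x t)"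
    by (rule summable_comparison_test'[OF geometric]) (use le nonneg in auto)
  have "(\<Sum>t. \<gamma> ^ t * x t) \<le> (\<Sum>t. \<gamma> ^ t)"
    by (rule suminf_le[OF le summable geometric])
  also have "\<dots> = 1 / (1 - \<gamma>)"
    using assms by (intro suminf_geometric) auto
  finally show ?thesis
    using summable nonneg by (auto intro: suminf_nonneg)
qed

lemma Qfun_bounds:
  assumes "\<And>u b. 0 \<le> \<pi> u b" and "\<And>u. (\<Sum>b\<in>UNIV. \<pi> u b) = 1"
    and rw: "\<And>s a. 0 \<le> rw s a \<and> rw s a \<le> 1" and "0 \<le> \<gamma>" "\<gamma> < 1"
  shows "0 \<le> Qfun Pt rw \<gamma> \<pi> s a \<and> Qfun Pt rw \<gamma> \<pi> s a \<le> 1 / (1 - \<gamma>)"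
  unfolding Qfun_def
proof (rule discounted_sum_bounds[OF assms(4,5)])
  fix t
  note dist = sa_dist_distribution[of \<pi> Pt s a t, OF assms(1,2)]
  have "(\<Sum>s'\<in>UNIV. \<Sum>a'\<in>UNIV. sa_dist Pt \<pi> s a t s' a' * rw s' a')
        \<le> (\<Sum>s'\<in>UNIV. \<Sum>a'\<in>UNIV. sa_dist Pt \<pi> s a t s' a')"
    using dist rw by (intro sum_mono mult_left_le) auto
  moreover have "0 \<le> (\<Sum>s'\<in>UNIV. \<Sum>a'\<in>UNIV. sa_dist Pt \<pi> s a t s' a' * rw s' a')"
    using dist rw by (intro sum_nonneg mult_nonneg_nonneg) auto
  ultimately show "0 \<le> (\<Sum>s'\<in>UNIV. \<Sum>a'\<in>UNIV. sa_dist Pt \<pi> s a t s' a' * rw s' a')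
      \<and> (\<Sum>s'\<in>UNIV. \<Sum>a'\<in>UNIV. sa_dist Pt \<pi> s a t s' a' * rw s' a') \<le> 1"
    using dist by linarith
qed

lemma dvisit_bounds:
  assumes "\<And>u b. 0 \<le> \<pi> u b" and "\<And>u. (\<Sum>b\<in>UNIV. \<pi> u b) = 1"
    and "0 \<le> \<gamma>" "\<gamma> < 1"
  shows "0 \<le> dvisit Pt \<gamma> \<rho> \<pi> s \<and> dvisit Pt \<gamma> \<rho> \<pi> s \<le> 1"
proof -
  define Y where "Y s\<^sub>0 = (\<Sum>t. \<gamma> ^ t * st_dist Pt \<pi> s\<^sub>0 t s)" for s\<^sub>0
  have Y: "0 \<le> Y s\<^sub>0 \<and> Y s\<^sub>0 \<le> 1 / (1 - \<gamma>)" for s\<^sub>0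
    unfolding Y_def
  proof (rule discounted_sum_bounds[OF assms(3,4)])
    fix t
    note dist = st_dist_distribution[of \<pi> Pt s\<^sub>0 t, OF assms(1,2)]
    have "st_dist Pt \<pi> s\<^sub>0 t s \<le> (\<Sum>s'\<in>UNIV. st_dist Pt \<pi> s\<^sub>0 t s')"
      using dist by (intro member_le_sum) auto
    then show "0 \<le> st_dist Pt \<pi> s\<^sub>0 t s \<and> st_dist Pt \<pi> s\<^sub>0 t s \<le> 1"
      using dist by auto
  qed
  have "(\<Sum>s\<^sub>0\<in>UNIV. pmf \<rho> s\<^sub>0 * Y s\<^sub>0) \<le> (\<Sum>s\<^sub>0\<in>UNIV. pmf \<rho> s\<^sub>0 * (1 / (1 - \<gamma>)))"
    using Y by (intro sum_mono mult_left_mono) auto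
  also have "\<dots> = (\<Sum>s\<^sub>0\<in>UNIV. pmf \<rho> s\<^sub>0) * (1 / (1 - \<gamma>))"
    by (rule sum_distrib_right[symmetric])
  also have "\<dots> = 1 / (1 - \<gamma>)"
    by (simp add: sum_pmf_eq_1)
  finally have "(1 - \<gamma>) * (\<Sum>s\<^sub>0\<in>UNIV. pmf \<rho> s\<^sub>0 * Y s\<^sub>0) \<le> 1"
    using assms(4) by (simp add: field_simps)
  moreover have "0 \<le> (\<Sum>s\<^sub>0\<in>UNIV. pmf \<rho> s\<^sub>0 * Y s\<^sub>0)"
    using Y by (intro sum_nonneg) auto
  ultimately show ?thesis
    unfolding dvisit_def Y_def[symmetric] using assms(4) by simp
qed

lemma mdp_ghat_eq:
  "mdp_ghat Pt rw \<gamma> \<rho> \<theta> \<sigma> (s, a)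
     = dvisit Pt \<gamma> \<rho> (tpol \<theta>) s / (1 - \<gamma>) * Qfun Pt rw \<gamma> (tpol \<theta>) s (\<sigma> s)
       * ((if \<sigma> s = a then 1 else 0) - tpol \<theta> s a)"
proof -
  have ne: "tpol \<theta> s b \<noteq> 0" for b
    using tpol_pos[of \<theta> s b] by simp
  have "(\<Sum>b\<in>UNIV. tpol \<theta> s b * mdp_Qhat Pt rw \<gamma> \<theta> \<sigma> s b)
      = (\<Sum>b\<in>UNIV. if \<sigma> s = b then Qfun Pt rw \<gamma> (tpol \<theta>) s b else 0)"
    by (intro sum.cong) (auto simp: mdp_Qhat_def ne)
  also have "\<dots> = Qfun Pt rw \<gamma> (tpol \<theta>) s (\<sigma> s)"
    by simp
  finally have mean_Qhat: "(\<Sum>b\<in>UNIV. tpol \<theta> s b * mdp_Qhat Pt rw \<gamma> \<theta> \<sigma> s b)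
      = Qfun Pt rw \<gamma> (tpol \<theta>) s (\<sigma> s)" .
  show ?thesis
  proof (cases "\<sigma> s = a")
    case True
    have "tpol \<theta> s a * (mdp_Qhat Pt rw \<gamma> \<theta> \<sigma> s a - Qfun Pt rw \<gamma> (tpol \<theta>) s (\<sigma> s))
        = Qfun Pt rw \<gamma> (tpol \<theta>) s (\<sigma> s) * (1 - tpol \<theta> s a)"
      using ne[of a] True by (simp add: mdp_Qhat_def algebra_simps)
    then show ?thesis
      unfolding mdp_ghat_def Let_def fst_conv snd_conv mean_Qhat mult.assoc[of _ "tpol \<theta> s a"]
      using True by simp
  next
    case False
    then show ?thesis
      unfolding mdp_ghat_def Let_def fst_conv snd_conv mean_Qhat by (simp add: mdp_Qhat_def)
  qed
qed

lemma abs_mdp_grad_eq: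
  assumes "\<gamma> < 1" and "0 \<le> dvisit Pt \<gamma> \<rho> (tpol \<theta>) s"
  shows "\<bar>mdp_grad Pt rw \<gamma> \<rho> \<theta> (s, a)\<bar>
           = dvisit Pt \<gamma> \<rho> (tpol \<theta>) s / (1 - \<gamma>) * (tpol \<theta> s a
             * \<bar>Qfun Pt rw \<gamma> (tpol \<theta>) s a - (\<Sum>b\<in>UNIV. tpol \<theta> s b * Qfun Pt rw \<gamma> (tpol \<theta>) s b)\<bar>)"
  unfolding mdp_grad_def Let_def fst_conv snd_conv Afun_def Vfun_def
  using assms tpol_pos[of \<theta> s a] by (simp add: abs_mult)

lemma mdp_gap_le:
  assumes "a \<noteq> a'"
  shows "mdp_gap Pt rw \<gamma> \<theta> \<le> \<bar>Qfun Pt rw \<gamma> (tpol \<theta>) s a - Qfun Pt rw \<gamma> (tpol \<theta>) s a'\<bar>"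
proof -
  let ?Q = "Qfun Pt rw \<gamma> (tpol \<theta>)"
  have "{\<bar>?Q s a - ?Q s a'\<bar> | s a a'. a \<noteq> a'} \<subseteq> range (\<lambda>(s, a, a'). \<bar>?Q s a - ?Q s a'\<bar>)"
  proof
    fix x
    assume "x \<in> {\<bar>?Q s a - ?Q s a'\<bar> | s a a'. a \<noteq> a'}"
    then obtain s a a' where "x = \<bar>?Q s a - ?Q s a'\<bar>" by blast
    then show "x \<in> range (\<lambda>(s, a, a'). \<bar>?Q s a - ?Q s a'\<bar>)"
      by (intro image_eqI[of _ _ "(s, a, a')"]) auto
  qed
  then have "finite {\<bar>?Q s a - ?Q s a'\<bar> | s a a'. a \<noteq> a'}"
    by (rule finite_subset) simp
  then show ?thesis
    unfolding mdp_gap_def using assms by (intro Min_le) blast+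
qed

lemma mdp_second_moment_le:
  fixes Pt :: "'s::finite \<Rightarrow> 'act::finite \<Rightarrow> 's pmf"
  assumes rw: "\<And>s a. 0 \<le> rw s a \<and> rw s a \<le> 1" and \<gamma>: "0 \<le> \<gamma>" "\<gamma> < 1"
  shows "mdp_second_moment Pt rw \<gamma> \<rho> \<theta>
           \<le> (\<Sum>s\<in>UNIV. dvisit Pt \<gamma> \<rho> (tpol \<theta>) s / (1 - \<gamma>) ^ 4
                 * (1 - (\<Sum>a\<in>UNIV. (tpol \<theta> s a)\<^sup>2)))"
proof -
  let ?\<pi> = "tpol \<theta>"
  let ?Q = "Qfun Pt rw \<gamma> (tpol \<theta>)"
  let ?d = "dvisit Pt \<gamma> \<rho> (tpol \<theta>)"
  let ?K = "\<lambda>s b. \<Sum>a\<in>UNIV. ((if b = a then 1 else 0) - tpol \<theta> s a)\<^sup>2"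
  let ?H = "\<lambda>s b. (?d s / (1 - \<gamma>) * ?Q s b)\<^sup>2 * ?K s b"
  have norm_eq: "(l2norm (mdp_ghat Pt rw \<gamma> \<rho> \<theta> \<sigma>))\<^sup>2 = (\<Sum>s\<in>UNIV. ?H s (\<sigma> s))" for \<sigma>
    unfolding l2norm_power2 sum_UNIV_pair mdp_ghat_eq sum_distrib_left
    by (intro sum.cong refl) (simp add: power_mult_distrib power_divide mult_ac)
  have H_le: "?H s a \<le> ?d s / (1 - \<gamma>) ^ 4 * ?K s a" for s a
  proof (rule mult_right_mono)
    have d: "0 \<le> ?d s" "?d s \<le> 1"
      using dvisit_bounds[of "tpol \<theta>", OF tpol_nonneg sum_tpol \<gamma>] by auto
    have Q: "0 \<le> ?Q s a" "?Q s a \<le> 1 / (1 - \<gamma>)"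
      using Qfun_bounds[of "tpol \<theta>", OF tpol_nonneg sum_tpol rw \<gamma>] by auto
    have "(?d s / (1 - \<gamma>) * ?Q s a)\<^sup>2 = (?d s)\<^sup>2 * (?Q s a)\<^sup>2 / (1 - \<gamma>)\<^sup>2"
      by (simp add: power_mult_distrib power_divide)
    also have "\<dots> \<le> ?d s * (1 / (1 - \<gamma>))\<^sup>2 / (1 - \<gamma>)\<^sup>2"
    proof (intro divide_right_mono mult_mono)
      show "(?d s)\<^sup>2 \<le> ?d s"
        using d by (simp add: power2_eq_square mult_left_le)
      show "(?Q s a)\<^sup>2 \<le> (1 / (1 - \<gamma>))\<^sup>2"
        using Q by (intro power_mono)
    qed (use d in auto)
    also have "\<dots> = ?d s / (1 - \<gamma>) ^ 4"
      by (simp add: power_divide flip: power_add)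
    finally show "(?d s / (1 - \<gamma>) * ?Q s a)\<^sup>2 \<le> ?d s / (1 - \<gamma>) ^ 4" .
  qed (intro sum_nonneg; simp)
  have "mdp_second_moment Pt rw \<gamma> \<rho> \<theta>
      = (\<Sum>\<sigma>\<in>UNIV. \<Sum>s\<in>UNIV. (\<Prod>s\<in>UNIV. ?\<pi> s (\<sigma> s)) * ?H s (\<sigma> s))"
    unfolding mdp_second_moment_def norm_eq by (simp add: sum_distrib_left)
  also have "\<dots> = (\<Sum>s\<in>UNIV. \<Sum>\<sigma>\<in>UNIV. (\<Prod>s\<in>UNIV. ?\<pi> s (\<sigma> s)) * ?H s (\<sigma> s))"
    by (rule sum.swap)
  also have "\<dots> = (\<Sum>s\<in>UNIV. \<Sum>a\<in>UNIV. ?\<pi> s a * ?H s a)"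
    by (intro sum.cong refl sum_prod_weights_marginal sum_tpol)
  also have "\<dots> \<le> (\<Sum>s\<in>UNIV. \<Sum>a\<in>UNIV. ?\<pi> s a * (?d s / (1 - \<gamma>) ^ 4 * ?K s a))"
    by (intro sum_mono mult_left_mono H_le tpol_nonneg)
  also have "\<dots> = (\<Sum>s\<in>UNIV. ?d s / (1 - \<gamma>) ^ 4 * (\<Sum>a\<in>UNIV. ?\<pi> s a * ?K s a))"
    by (simp add: sum_distrib_left algebra_simps)
  also have "\<dots> = (\<Sum>s\<in>UNIV. ?d s / (1 - \<gamma>) ^ 4 * (1 - (\<Sum>a\<in>UNIV. (?\<pi> s a)\<^sup>2)))"
    by (simp only: sum_weighted_sq_dist_indicator[OF sum_tpol])
  finally show ?thesis .
qed

lemma mdp_second_moment_mult_gap_le: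
  fixes Pt :: "'s::finite \<Rightarrow> 'act::finite \<Rightarrow> 's pmf"
  assumes rw: "\<And>s a. 0 \<le> rw s a \<and> rw s a \<le> 1" and \<gamma>: "0 \<le> \<gamma>" "\<gamma> < 1"
    and gap_pos: "mdp_gap Pt rw \<gamma> \<theta> > 0"
  shows "mdp_second_moment Pt rw \<gamma> \<rho> \<theta> * mdp_gap Pt rw \<gamma> \<theta>
           \<le> 4 / (1 - \<gamma>) ^ 3 * sqrt (real CARD('s)) * sqrt (real CARD('act))
              * l2norm (mdp_grad Pt rw \<gamma> \<rho> \<theta>)"
proof -
  let ?\<pi> = "tpol \<theta>"
  let ?Q = "Qfun Pt rw \<gamma> (tpol \<theta>)"
  let ?d = "dvisit Pt \<gamma> \<rho> (tpol \<theta>)"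
  let ?\<Delta> = "mdp_gap Pt rw \<gamma> \<theta>"
  let ?mad = "\<lambda>s. \<Sum>a\<in>UNIV. ?\<pi> s a * \<bar>?Q s a - (\<Sum>b\<in>UNIV. ?\<pi> s b * ?Q s b)\<bar>"
  have d_nonneg: "0 \<le> ?d s" for s
    using dvisit_bounds[of "tpol \<theta>", OF tpol_nonneg sum_tpol \<gamma>] by blast
  have "mdp_second_moment Pt rw \<gamma> \<rho> \<theta> * ?\<Delta>
      \<le> (\<Sum>s\<in>UNIV. ?d s / (1 - \<gamma>) ^ 4 * (1 - (\<Sum>a\<in>UNIV. (?\<pi> s a)\<^sup>2))) * ?\<Delta>"
    using gap_pos by (intro mult_right_mono mdp_second_moment_le[OF rw \<gamma>]) auto
  also have "\<dots> = (\<Sum>s\<in>UNIV. ?d s / (1 - \<gamma>) ^ 4 * ((1 - (\<Sum>a\<in>UNIV. (?\<pi> s a)\<^sup>2)) * ?\<Delta>))"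
    by (simp add: sum_distrib_right mult.assoc)
  also have "\<dots> \<le> (\<Sum>s\<in>UNIV. ?d s / (1 - \<gamma>) ^ 4 * (4 * ?mad s))"
    using \<gamma> gap_pos d_nonneg
    by (intro sum_mono mult_left_mono non_collision_mult_gap_le_mean_abs_dev mdp_gap_le sum_tpol)
       (auto intro: tpol_nonneg)
  also have "\<dots> = (\<Sum>s\<in>UNIV. 4 / (1 - \<gamma>) ^ 3 * (?d s / (1 - \<gamma>) * ?mad s))"
    using \<gamma> by (intro sum.cong refl) (simp add: field_simps eval_nat_numeral)
  also have "\<dots> = 4 / (1 - \<gamma>) ^ 3 * (\<Sum>s\<in>UNIV. \<Sum>a\<in>UNIV. ?d s / (1 - \<gamma>)
                    * (?\<pi> s a * \<bar>?Q s a - (\<Sum>b\<in>UNIV. ?\<pi> s b * ?Q s b)\<bar>))"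
    by (simp only: sum_distrib_left)
  also have "\<dots> = 4 / (1 - \<gamma>) ^ 3 * (\<Sum>x\<in>UNIV. \<bar>mdp_grad Pt rw \<gamma> \<rho> \<theta> x\<bar>)"
    unfolding sum_UNIV_pair using \<gamma> d_nonneg by (simp add: abs_mdp_grad_eq)
  also have "\<dots> \<le> 4 / (1 - \<gamma>) ^ 3 * (sqrt (real CARD('s \<times> 'act)) * l2norm (mdp_grad Pt rw \<gamma> \<rho> \<theta>))"
    using \<gamma> by (intro mult_left_mono sum_abs_le_sqrt_card_l2norm) auto
  finally show ?thesis
    by (simp add: real_sqrt_mult mult_ac)
qed

lemma mdp_second_moment_bound:
  fixes Pt :: "'s::finite \<Rightarrow> 'act::finite \<Rightarrow> 's pmf"
  assumes rw: "\<And>s a. 0 \<le> rw s a \<and> rw s a \<le> 1" and \<gamma>: "0 \<le> \<gamma>" "\<gamma> < 1"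
    and gap_pos: "mdp_gap Pt rw \<gamma> \<theta> > 0"
  shows "mdp_second_moment Pt rw \<gamma> \<rho> \<theta>
           \<le> 4 * real CARD('act) powr (3/2) * real CARD('s) powr (1/2)
               / ((1 - \<gamma>) ^ 4 * (mdp_gap Pt rw \<gamma> \<theta>)\<^sup>2)
              * l2norm (mdp_grad Pt rw \<gamma> \<rho> \<theta>)"
proof (cases "\<forall>a a'::'act. a = a'")
  case True
  then have "mdp_second_moment Pt rw \<gamma> \<rho> \<theta> \<le> 0"
    using mdp_second_moment_le[OF rw \<gamma>, where \<rho> = \<rho> and \<theta> = \<theta>]
    by (simp add: sum_power2_eq_1_if_trivial_type sum_tpol)
  also have "0 \<le> 4 * real CARD('act) powr (3/2) * real CARD('s) powr (1/2)
                  / ((1 - \<gamma>) ^ 4 * (mdp_gap Pt rw \<gamma> \<theta>)\<^sup>2) * l2norm (mdp_grad Pt rw \<gamma> \<rho> \<theta>)"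
    using \<gamma> by (simp add: l2norm_nonneg)
  finally show ?thesis .
next
  case False
  let ?Q = "Qfun Pt rw \<gamma> (tpol \<theta>)"
  obtain a a' :: 'act where "a \<noteq> a'"
    using False by blast
  obtain s :: 's where True
    by blast
  from \<open>a \<noteq> a'\<close> have "mdp_gap Pt rw \<gamma> \<theta> \<le> \<bar>?Q s a - ?Q s a'\<bar>"
    by (rule mdp_gap_le)
  also have "\<dots> \<le> 1 / (1 - \<gamma>)"
  proof -
    have "0 \<le> ?Q s b \<and> ?Q s b \<le> 1 / (1 - \<gamma>)" for b
      by (rule Qfun_bounds[of "tpol \<theta>", OF tpol_nonneg sum_tpol rw \<gamma>])
    from this[of a] this[of a'] show ?thesis by linarith
  qed
  also have "\<dots> \<le> real CARD('act) / (1 - \<gamma>)"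
  proof -
    have "1 \<le> real CARD('act)" by simp
    with \<gamma> show ?thesis by (intro divide_right_mono) auto
  qed
  finally have gap_le: "mdp_gap Pt rw \<gamma> \<theta> \<le> real CARD('act) / (1 - \<gamma>)" .
  have "mdp_second_moment Pt rw \<gamma> \<rho> \<theta>
      \<le> 4 / (1 - \<gamma>) ^ 3 * sqrt (real CARD('s)) * sqrt (real CARD('act))
         * (real CARD('act) / (1 - \<gamma>)) / (mdp_gap Pt rw \<gamma> \<theta>)\<^sup>2 * l2norm (mdp_grad Pt rw \<gamma> \<rho> \<theta>)"
    using mdp_second_moment_mult_gap_le[OF rw \<gamma> gap_pos] gap_pos gap_le \<gamma>
    by (intro le_div_power2_if_mult_le) (auto simp: l2norm_nonneg)
  also have "\<dots> = 4 * real CARD('act) powr (3/2) * real CARD('s) powr (1/2)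
                  / ((1 - \<gamma>) ^ 4 * (mdp_gap Pt rw \<gamma> \<theta>)\<^sup>2) * l2norm (mdp_grad Pt rw \<gamma> \<rho> \<theta>)"
    by (simp add: powr_three_halves powr_half_sqrt divide_simps mult_ac power_Suc2 eval_nat_numeral)
  finally show ?thesis .
qed

theorem theorem4:
  fixes P :: "'arm::finite \<Rightarrow> real measure"
    and Pt :: "'s::finite \<Rightarrow> 'act::finite \<Rightarrow> 's pmf"
    and rw :: "'s \<Rightarrow> 'act \<Rightarrow> real"
    and \<gamma> :: real
    and \<rho> :: "'s pmf"
  assumes P_prob: "\<And>a. prob_space (P a)"
    and P_borel: "\<And>a. sets (P a) = sets borel"
    and P_supp: "\<And>a. AE x in P a. 0 \<le> x \<and> x \<le> 1"
    and rw_bounds: "\<And>s a. 0 \<le> rw s a \<and> rw s a \<le> 1"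
    and \<gamma>_bounds: "0 \<le> \<gamma>" "\<gamma> < 1"
  shows
    "(\<forall>\<theta> :: 'arm \<Rightarrow> real.
        bandit_gap (mean_reward P) > 0 \<longrightarrow>
        bandit_second_moment P \<theta>
          \<le> 8 * real CARD('arm) powr (3/2) / (bandit_gap (mean_reward P))\<^sup>2
             * l2norm (bandit_grad (mean_reward P) \<theta>))
   \<and> (\<forall>\<theta> :: 's \<Rightarrow> 'act \<Rightarrow> real.
        mdp_gap Pt rw \<gamma> \<theta> > 0 \<longrightarrow>
        mdp_second_moment Pt rw \<gamma> \<rho> \<theta>
          \<le> 4 * real CARD('act) powr (3/2) * real CARD('s) powr (1/2)
              / ((1 - \<gamma>) ^ 4 * (mdp_gap Pt rw \<gamma> \<theta>)\<^sup>2)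
             * l2norm (mdp_grad Pt rw \<gamma> \<rho> \<theta>))"
  by (intro conjI allI impI bandit_second_moment_bound[of P, OF P_prob P_supp]
      mdp_second_moment_bound[where rw = rw, OF rw_bounds \<gamma>_bounds])

end
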